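(* Let $0<r<1$, let $R:=\{z\in\mathbb{C}:\frac{1+3r}{4}\le|z|\le\frac{1+r}{2}\}$, and let $X$ be the family of circles centered at $0$ contained in $R$. For $f\in\mathcal{A}_r$ put $$t(f):=\sup_{S\in X}\inf_{z\in S} f(z).$$ Then $$C(r):=\inf_{f\in\mathcal{A}_r} t(f)>-\infty .$$
   Context: $\mathbb{D}_\rho:=\{z\in\mathbb{C}:|z|<\rho\}$ and $\mathbb{D}:=\mathbb{D}_1$. For $0<r<1$, $\mathcal{A}_r$ is the family of continuous nonpositive subharmonic functions $f:\mathbb{D}\to\mathbb{R}$ such that $\sup_{\mathbb{D}_r} f\ge -1$. *)

theory Defs
  imports "HOL-Analysis.Analysis"
begin

text \<open>Subharmonicity on an open set U (Ransford's definition): upper semicontinuity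
  (here implied by continuity, which is assumed separately) together with the local
  submean inequality: every point has a radius below which the value at the point is at
  most the mean over circles.\<close>
definition circle_mean :: "(complex \<Rightarrow> real) \<Rightarrow> complex \<Rightarrow> real \<Rightarrow> real" where
  "circle_mean f z \<rho> = integral {0..2*pi} (\<lambda>t. f (z + complex_of_real \<rho> * cis t)) / (2*pi)"

definition subharmonic_on :: "(complex \<Rightarrow> real) \<Rightarrow> complex set \<Rightarrow> bool" where
  "subharmonic_on f U \<longleftrightarrow>
     (\<forall>z\<in>U. \<exists>\<delta>>0. \<forall>\<rho>. 0 \<le> \<rho> \<and> \<rho> < \<delta> \<longrightarrow> f z \<le> circle_mean f z \<rho>)"

definition A_fam :: "real \<Rightarrow> (complex \<Rightarrow> real) set" where
  "A_fam r = {f. continuous_on (ball 0 1) f \<and> subharmonic_on f (ball 0 1)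
                 \<and> (\<forall>z\<in>ball 0 1. f z \<le> 0) \<and> Sup (f ` ball 0 r) \<ge> -1}"

definition t_val :: "real \<Rightarrow> (complex \<Rightarrow> real) \<Rightarrow> real" where
  "t_val r f = (SUP s\<in>{(1+3*r)/4..(1+r)/2}. INF z\<in>sphere 0 s. f z)"

end

theory Submission
  imports Defs "HOL-Complex_Analysis.Cauchy_Integral_Formula"
begin

text \<open>Suppose that every circle \<open>|z| = s\<close> in \<open>R\<close> carries a point where \<open>f < -(C+1)\<close>. Pick \<open>N\<close>
  equally spaced such circles and points \<open>w\<^sub>k\<close> on them; by uniform continuity \<open>f < -C\<close> on small discs
  \<open>D\<^sub>k\<close> around the \<open>w\<^sub>k\<close>. With \<open>G\<close> the Green function of the disc \<open>|z| < c\<close>, the function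
  \<open>\<Phi> = f + \<kappa> \<Sum>\<^sub>k G(\<cdot>, w\<^sub>k) + |z|\<^sup>2/2\<close> is strictly subharmonic off the poles, so its maximum over
  \<open>|z| \<le> c\<close> minus the \<open>D\<^sub>k\<close> lies on the boundary. There \<open>\<Phi> \<le> 1/2\<close>: on \<open>|z| = c\<close> because \<open>G\<close>
  vanishes and \<open>f \<le> 0\<close>, on \<open>\<partial>D\<^sub>j\<close> because \<open>f < -C\<close> while the spacing of the poles keeps
  \<open>\<Sum>\<^sub>k G(\<cdot>, w\<^sub>k) = O(N)\<close>. But \<open>G\<close> is bounded below on \<open>|z| < r\<close>, where \<open>f > -2\<close> somewhere,
  so \<open>\<Phi> > 1\<close> there once \<open>\<kappa> \<sim> 1/N\<close>.\<close>

section \<open>Circle means\<close>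

lemma holomorphic_circle_mean:
  assumes holo: "h holomorphic_on cball p \<rho>" and \<rho>: "0 < \<rho>"
  shows "((\<lambda>t. h (p + of_real \<rho> * cis t)) has_integral (of_real (2*pi) * h p)) {0..2*pi}"
proof -
  have "((\<lambda>u. h u / (u - p)) has_contour_integral (2 * of_real pi * \<i> * h p)) (circlepath p \<rho>)"
    by (rule Cauchy_integral_circlepath_simple[OF holo]) (use \<rho> in simp)
  then have "((\<lambda>t. h (p + \<rho> * cis t) / (p + \<rho> * cis t - p) * \<rho> * \<i> * cis t)
      has_integral (2 * of_real pi * \<i> * h p)) {0..2*pi}"
    unfolding circlepath_def by (subst (asm) has_contour_integral_part_circlepath_iff) auto
  moreover have "(\<lambda>t. h (p + \<rho> * cis t) / (p + \<rho> * cis t - p) * \<rho> * \<i> * cis t)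
      = (\<lambda>t. \<i> * h (p + \<rho> * cis t))"
    using \<rho> by (intro ext) (simp add: field_simps)
  ultimately have "((\<lambda>t. (-\<i>) * (\<i> * h (p + \<rho> * cis t))) has_integral (-\<i>) * (2 * of_real pi * \<i> * h p)) {0..2*pi}"
    by (intro has_integral_mult_right) simp
  then show ?thesis by (simp add: algebra_simps)
qed

text \<open>The real part of \<open>Ln (1 + A (u - p) / (A p + B))\<close> is harmonic near \<open>p\<close> and differs from
  \<open>ln |A u + B|\<close> by a constant.\<close>
lemma ln_norm_affine_circle_mean:
  fixes A B p :: complex
  assumes \<rho>: "0 < \<rho>" and lt: "cmod A * \<rho> < cmod (A*p + B)"
  shows "((\<lambda>t. ln (cmod (A * (p + of_real \<rho> * cis t) + B))) has_integral (2*pi * ln (cmod (A*p + B)))) {0..2*pi}"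
proof -
  define L where "L = A*p + B"
  have "0 \<le> cmod A * \<rho>" using \<rho> by simp
  then have L: "L \<noteq> 0" using lt by (auto simp: L_def)
  define g where "g u = 1 + (A/L) * (u - p)" for u
  have Re_g: "0 < Re (g u)" if "u \<in> cball p \<rho>" for u
  proof -
    have "cmod ((A/L) * (u - p)) \<le> cmod A * \<rho> / cmod L"
      using that by (auto simp: norm_mult norm_divide dist_norm norm_minus_commute intro!: divide_right_mono mult_left_mono)
    also have "\<dots> < 1" using lt L by (simp add: L_def)
    finally have "\<bar>Re ((A/L) * (u - p))\<bar> < 1" using abs_Re_le_cmod le_less_trans by blast
    then show ?thesis by (simp add: g_def)
  qed
  have "(\<lambda>u. Ln (g u)) holomorphic_on cball p \<rho>"
    unfolding g_def by (intro holomorphic_intros) (use Re_g in \<open>fastforce simp: g_def complex_nonpos_Reals_iff\<close>)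
  from has_integral_Re[OF holomorphic_circle_mean[OF this \<rho>]]
  have "((\<lambda>t. Re (Ln (g (p + of_real \<rho> * cis t)))) has_integral 0) {0..2*pi}"
    by (simp add: g_def)
  moreover have "g (p + of_real \<rho> * cis t) \<noteq> 0" for t
    using Re_g[of "p + of_real \<rho> * cis t"] \<rho> by (auto simp: dist_norm norm_mult)
  ultimately have "((\<lambda>t. ln (cmod (g (p + of_real \<rho> * cis t)))) has_integral 0) {0..2*pi}"
    by simp
  then have "((\<lambda>t. ln (cmod (g (p + of_real \<rho> * cis t))) + ln (cmod L)) has_integral (0 + 2*pi * ln (cmod L))) {0..2*pi}"
    by (intro has_integral_add) (use has_integral_const_real[of "ln (cmod L)" 0 "2*pi"] in simp_all)
  moreover have "ln (cmod (g u)) + ln (cmod L) = ln (cmod (A * u + B))" if "u \<in> cball p \<rho>" for u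
  proof -
    have "g u \<noteq> 0" using Re_g[OF that] by auto
    moreover have "A * u + B = L * g u" using L by (simp add: g_def L_def field_simps)
    ultimately show ?thesis using L by (simp add: norm_mult ln_mult)
  qed
  ultimately show ?thesis using \<rho> by (simp add: L_def dist_norm norm_mult)
qed

lemma norm_sq_circle_mean:
  assumes \<rho>: "0 < \<rho>"
  shows "((\<lambda>t. (cmod (p + of_real \<rho> * cis t))^2) has_integral (2*pi * ((cmod p)^2 + \<rho>^2))) {0..2*pi}"
proof -
  define g where "g u = 2 * cnj p * u - of_real ((cmod p)^2)" for u
  have norm_sq: "(cmod u)^2 = Re (g u) + (cmod (u - p))^2" for u
    unfolding g_def cmod_power2 by (simp add: power2_eq_square algebra_simps)
  have "g p = of_real ((cmod p)^2)"
    by (simp add: g_def mult.assoc complex_norm_square[symmetric] mult.commute[of "cnj p"])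
  moreover have "g holomorphic_on cball p \<rho>" unfolding g_def by (intro holomorphic_intros)
  ultimately have "((\<lambda>t. Re (g (p + of_real \<rho> * cis t))) has_integral 2*pi * (cmod p)^2) {0..2*pi}"
    using has_integral_Re[OF holomorphic_circle_mean[OF _ \<rho>]] by fastforce
  then have "((\<lambda>t. Re (g (p + of_real \<rho> * cis t)) + \<rho>^2) has_integral 2*pi * (cmod p)^2 + 2*pi * \<rho>^2) {0..2*pi}"
    by (intro has_integral_add) (use has_integral_const_real[of "\<rho>^2" 0 "2*pi"] in simp_all)
  then show ?thesis using \<rho> by (simp add: norm_sq[of "p + _"] norm_mult distrib_left)
qed

section \<open>The Green function of a disc\<close>

definition disc_green :: "real \<Rightarrow> complex \<Rightarrow> complex \<Rightarrow> real" where
  "disc_green c z w = ln (cmod (of_real (c^2) - cnj w * z)) - ln c - ln (cmod (z - w))"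

lemma norm_disc_green_numerator_ge:
  assumes "0 < c" "cmod z \<le> c" "cmod w < c"
  shows "0 < c^2 - cmod w * cmod z" "c^2 - cmod w * cmod z \<le> cmod (of_real (c^2) - cnj w * z)"
proof -
  have "cmod w * cmod z \<le> cmod w * c" using assms by (intro mult_left_mono) auto
  also have "\<dots> < c * c" using assms by simp
  finally have "cmod w * cmod z < c * c" .
  then show "0 < c^2 - cmod w * cmod z" by (simp add: power2_eq_square)
  show "c^2 - cmod w * cmod z \<le> cmod (of_real (c^2) - cnj w * z)"
    using norm_triangle_ineq2[of "of_real (c^2) :: complex" "cnj w * z"] by (simp add: norm_mult norm_power)
qed

lemma disc_green_eq_0_on_circle:
  assumes "0 < c" "cmod z = c" "z \<noteq> w"
  shows "disc_green c z w = 0"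
proof -
  have "of_real (c^2) - cnj w * z = z * cnj (z - w)"
    using assms(2) complex_norm_square[of z] by (simp add: algebra_simps)
  then have "cmod (of_real (c^2) - cnj w * z) = cmod z * cmod (cnj (z - w))"
    by (simp only: norm_mult)
  then have "cmod (of_real (c^2) - cnj w * z) = c * cmod (z - w)"
    using assms(2) by (simp only: complex_mod_cnj)
  then show ?thesis using assms by (simp add: disc_green_def ln_mult)
qed

lemma disc_green_le:
  assumes "0 < c" "c \<le> 1" "cmod z \<le> c" "cmod w < c" "z \<noteq> w"
  shows "disc_green c z w \<le> ln 2 - ln (cmod (z - w))"
proof -
  have "cmod (of_real (c^2) - cnj w * z) \<le> c^2 + cmod w * cmod z"
    using norm_triangle_ineq4[of "of_real (c^2) :: complex" "cnj w * z"] by (simp add: norm_mult norm_power)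
  also have "\<dots> \<le> c^2 + c * c"
    using assms by (intro add_left_mono mult_mono) auto
  also have "\<dots> \<le> 2 * c"
    using assms by (simp add: power2_eq_square mult_left_le)
  finally have "cmod (of_real (c^2) - cnj w * z) \<le> 2 * c" .
  moreover have "0 < cmod (of_real (c^2) - cnj w * z)"
    using norm_disc_green_numerator_ge[of c z w] assms by linarith
  ultimately have "ln (cmod (of_real (c^2) - cnj w * z)) \<le> ln (2 * c)"
    using assms by simp
  then show ?thesis using assms by (simp add: disc_green_def ln_mult)
qed

lemma norm_disc_green_numerator_sq:
  "(cmod (of_real (c^2) - cnj w * z))^2 = c^2 * (cmod (z - w))^2 + (c^2 - (cmod z)^2) * (c^2 - (cmod w)^2)"
  unfolding cmod_power2 by (simp add: power2_eq_square algebra_simps)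

lemma disc_green_ge:
  assumes "0 \<le> r" "r < c" "b < c" "c \<le> 1" "cmod z < r" "cmod w \<le> b" "z \<noteq> w"
  shows "ln (1 + (c^2 - r^2) * (c^2 - b^2) / 4) / 2 \<le> disc_green c z w"
proof -
  define X where "X = cmod (of_real (c^2) - cnj w * z)"
  define Y where "Y = c * cmod (z - w)"
  define d where "d = (c^2 - r^2) * (c^2 - b^2)"
  have "0 \<le> b" using assms(6) norm_ge_zero order_trans by blast
  have "r^2 < c^2" "b^2 < c^2" "(cmod z)^2 \<le> r^2" "(cmod w)^2 \<le> b^2"
    using assms \<open>0 \<le> b\<close> by (auto intro!: power_strict_mono power_mono)
  then have d: "0 < d" "d \<le> (c^2 - (cmod z)^2) * (c^2 - (cmod w)^2)"
    unfolding d_def by (auto intro!: mult_mono)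
  have Y: "0 < Y" using assms by (simp add: Y_def)
  have "Y \<le> 1 * 2"
    unfolding Y_def using assms norm_triangle_ineq4[of z w] by (intro mult_mono) auto
  then have "Y^2 \<le> 2^2" using Y by (intro power_mono) auto
  then have "Y^2 * (d / 4) \<le> d" using d by (simp add: field_simps)
  moreover have "X^2 = Y^2 + (c^2 - (cmod z)^2) * (c^2 - (cmod w)^2)"
    unfolding X_def Y_def norm_disc_green_numerator_sq by (simp add: power_mult_distrib)
  moreover have "Y^2 * (1 + d / 4) = Y^2 + Y^2 * (d / 4)" by (simp add: distrib_left)
  ultimately have "Y^2 * (1 + d / 4) \<le> X^2" using d by linarith
  then have "ln (Y^2 * (1 + d / 4)) \<le> ln (X^2)"
    using Y d by (intro ln_mono) auto
  then have "2 * ln Y + ln (1 + d / 4) \<le> 2 * ln X"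
    using Y d \<open>Y^2 * (1 + d / 4) \<le> X^2\<close> by (simp add: ln_mult ln_realpow)
  moreover have "disc_green c z w = ln X - ln Y"
    using assms by (simp add: disc_green_def X_def Y_def ln_mult)
  ultimately show ?thesis unfolding d_def by simp
qed

lemma disc_green_circle_mean:
  assumes c: "0 < c" and \<rho>: "0 < \<rho>" and w: "cmod w < c"
    and pc: "cmod p + \<rho> < c" and pw: "\<rho> < cmod (p - w)"
  shows "((\<lambda>t. disc_green c (p + of_real \<rho> * cis t) w) has_integral (2*pi * disc_green c p w)) {0..2*pi}"
proof -
  have "cmod (- cnj w) * \<rho> \<le> c * \<rho>" using w \<rho> by simp
  also have "\<dots> < c * (c - cmod p)" using c pc by simp
  also have "\<dots> \<le> c^2 - cmod w * cmod p"
    using mult_right_mono[of "cmod w" c "cmod p"] w by (simp add: power2_eq_square algebra_simps)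
  also have "\<dots> \<le> cmod (- cnj w * p + of_real (c^2))"
    using norm_disc_green_numerator_ge(2)[of c p w] c pc \<rho> w by simp
  finally have numerator: "((\<lambda>t. ln (cmod (- cnj w * (p + of_real \<rho> * cis t) + of_real (c^2))))
      has_integral 2*pi * ln (cmod (- cnj w * p + of_real (c^2)))) {0..2*pi}"
    by (rule ln_norm_affine_circle_mean[OF \<rho>])
  have "((\<lambda>t. ln (cmod (1 * (p + of_real \<rho> * cis t) + - w))) has_integral 2*pi * ln (cmod (1 * p + - w))) {0..2*pi}"
    by (rule ln_norm_affine_circle_mean[OF \<rho>]) (use pw in simp)
  from has_integral_diff[OF has_integral_diff[OF numerator has_integral_const_real[of "ln c" 0 "2*pi"]] this]
  show ?thesis by (simp add: disc_green_def algebra_simps)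
qed

section \<open>Green potentials of equally spaced poles\<close>

lemma sum_ln_ge: "real N * ln (real N) - real N \<le> (\<Sum>m=1..N. ln (real m))"
proof (induction N)
  case 0
  then show ?case by simp
next
  case (Suc N)
  show ?case
  proof (cases "N = 0")
    case False
    then have N: "0 < real N" by simp
    have "ln (1 + 1 / real N) \<le> 1 / real N" by (rule ln_add_one_self_le_self) simp
    then have "real N * (ln (real N + 1) - ln (real N)) \<le> 1"
      using N by (simp add: field_simps ln_div)
    then have "real (Suc N) * ln (real (Suc N)) - real (Suc N) \<le> real N * ln (real N) - real N + ln (real (Suc N))"
      by (simp add: algebra_simps)
    also have "\<dots> \<le> (\<Sum>m=1..Suc N. ln (real m))" using Suc.IH by simp
    finally show ?thesis .
  qed simp
qed

lemma sum_ln_ratio_le: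
  assumes "M \<le> N"
  shows "(\<Sum>m=1..M. ln (real N / real m)) \<le> real N"
proof -
  have "(\<Sum>m=1..M. ln (real N / real m)) \<le> (\<Sum>m=1..N. ln (real N / real m))"
    using assms by (intro sum_mono2) auto
  also have "\<dots> = real N * ln (real N) - (\<Sum>m=1..N. ln (real m))"
    by (simp add: ln_div sum_subtractf)
  also have "\<dots> \<le> real N" using sum_ln_ge[of N] by simp
  finally show ?thesis .
qed

lemma sum_ln_ratio_dist_le:
  assumes j: "j \<in> {1..N}"
  shows "(\<Sum>k\<in>{1..N}-{j}. ln (real N / \<bar>real k - real j\<bar>)) \<le> 2 * real N"
proof -
  have split: "{1..N}-{j} = {1..<j} \<union> {j<..N}" using j by auto
  have "(\<Sum>k\<in>{1..N}-{j}. ln (real N / \<bar>real k - real j\<bar>)) =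
      (\<Sum>k\<in>{1..<j}. ln (real N / \<bar>real k - real j\<bar>)) + (\<Sum>k\<in>{j<..N}. ln (real N / \<bar>real k - real j\<bar>))"
    unfolding split by (rule sum.union_disjoint) auto
  also have "(\<Sum>k\<in>{1..<j}. ln (real N / \<bar>real k - real j\<bar>)) = (\<Sum>m=1..j-1. ln (real N / real m))"
    by (rule sum.reindex_bij_witness[where i="\<lambda>m. j - m" and j="\<lambda>k. j - k"]) (auto simp: of_nat_diff)
  also have "(\<Sum>k\<in>{j<..N}. ln (real N / \<bar>real k - real j\<bar>)) = (\<Sum>m=1..N-j. ln (real N / real m))"
    by (rule sum.reindex_bij_witness[where i="\<lambda>m. m + j" and j="\<lambda>k. k - j"]) (auto simp: of_nat_diff)
  moreover have "j - 1 \<le> N" "N - j \<le> N" using j by auto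
  ultimately show ?thesis
    using sum_ln_ratio_le[of "j - 1" N] sum_ln_ratio_le[of "N - j" N] by simp
qed

text \<open>Pole \<open>k\<close> lies at distance at least \<open>|k - j| (b - a) / (2 N)\<close> from \<open>p\<close>, so by a Stirling-type
  bound the sum is \<open>O(N)\<close> rather than \<open>O(N log N)\<close>.\<close>
lemma disc_green_sum_near_pole_le:
  fixes w :: "nat \<Rightarrow> complex"
  assumes c: "0 < c" "c \<le> 1" and "0 < N" and ab: "0 < b - a" "b - a < 1"
    and w: "\<And>k. k \<in> {1..N} \<Longrightarrow> cmod (w k) = a + real k * ((b - a) / N) \<and> cmod (w k) < c"
    and j: "j \<in> {1..N}" and p: "cmod p \<le> c" "cmod (p - w j) = (b - a) / N / 4"
  shows "(\<Sum>k\<in>{1..N}. disc_green c p (w k)) \<le> real N * (6 - ln (b - a))"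
proof -
  define h where "h = (b - a) / N"
  have h: "0 < h" using ab \<open>0 < N\<close> by (simp add: h_def)
  have ln2: "ln 2 \<le> (1::real)" using ln_le_minus_one[of 2] by simp
  have green_le: "disc_green c p (w k) \<le> ln 2 - ln (cmod (p - w k))" if "k \<in> {1..N}" "p \<noteq> w k" for k
    using disc_green_le[of c p "w k"] c p(1) w[OF that(1)] that(2) by auto
  have far: "\<bar>real k - real j\<bar> * h / 2 \<le> cmod (p - w k)" if k: "k \<in> {1..N}" "k \<noteq> j" for k
  proof -
    have "\<bar>real k - real j\<bar> * h = \<bar>(a + real k * h) - (a + real j * h)\<bar>"
      using h by (simp add: abs_mult flip: left_diff_distrib)
    also have "\<dots> = \<bar>cmod (w k) - cmod (w j)\<bar>"
      using w[OF j] w[OF k(1)] by (simp add: h_def)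
    also have "\<dots> \<le> cmod (p - w k) + cmod (p - w j)"
      using norm_triangle_ineq3[of "w k" "w j"] norm_triangle_ineq4[of "p - w j" "p - w k"]
      by (simp add: norm_minus_commute)
    finally have "\<bar>real k - real j\<bar> * h - h / 4 \<le> cmod (p - w k)" using p by (simp add: h_def)
    moreover have "1 \<le> \<bar>real k - real j\<bar>" using k(2) by (cases "k < j") auto
    then have "h \<le> \<bar>real k - real j\<bar> * h" using h by simp
    ultimately show ?thesis using h by linarith
  qed
  have at_pole: "disc_green c p (w j) \<le> 3 + real N - ln (b - a)"
  proof -
    have "ln (cmod (p - w j)) = ln (b - a) - ln (real N) - 2 * ln 2"
      using p ab \<open>0 < N\<close> ln_realpow[of 2 2] by (simp add: ln_div ln_mult)
    moreover have "p \<noteq> w j" using p(2) h by (auto simp: h_def)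
    ultimately show ?thesis
      using green_le[OF j] ln2 ln_le_minus_one[of "real N"] \<open>0 < N\<close> by auto
  qed
  have off_pole: "disc_green c p (w k) \<le> 2 - ln (b - a) + ln (real N / \<bar>real k - real j\<bar>)"
    if k: "k \<in> {1..N} - {j}" for k
  proof -
    have d: "1 \<le> \<bar>real k - real j\<bar>" using k by (cases "k < j") auto
    then have pos: "0 < \<bar>real k - real j\<bar> * h / 2" using h by simp
    have far_k: "\<bar>real k - real j\<bar> * h / 2 \<le> cmod (p - w k)" using far k by auto
    then have "ln (\<bar>real k - real j\<bar> * h / 2) \<le> ln (cmod (p - w k))" using pos by (rule ln_mono)
    moreover have "ln (\<bar>real k - real j\<bar> * h / 2) = ln (b - a) - ln (real N / \<bar>real k - real j\<bar>) - ln 2"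
      using d ab \<open>0 < N\<close> by (simp add: h_def ln_mult ln_div)
    moreover have "p \<noteq> w k" using far_k pos by auto
    ultimately show ?thesis using green_le[of k] k ln2 by auto
  qed
  have "(\<Sum>k\<in>{1..N}. disc_green c p (w k)) = disc_green c p (w j) + (\<Sum>k\<in>{1..N}-{j}. disc_green c p (w k))"
    using j by (simp add: sum.remove)
  also have "\<dots> \<le> (3 + real N - ln (b - a)) + (\<Sum>k\<in>{1..N}-{j}. (2 - ln (b - a)) + ln (real N / \<bar>real k - real j\<bar>))"
    using at_pole off_pole by (intro add_mono sum_mono) auto
  also have "\<dots> = 3 + real N - ln (b - a) + real (N - 1) * (2 - ln (b - a)) + (\<Sum>k\<in>{1..N}-{j}. ln (real N / \<bar>real k - real j\<bar>))"
    using j by (simp add: sum.distrib)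
  also have "\<dots> \<le> real N * (6 - ln (b - a))"
    using sum_ln_ratio_dist_le[OF j] \<open>0 < N\<close> ab by (simp add: of_nat_diff algebra_simps)
  finally show ?thesis .
qed

section \<open>A strict maximum principle\<close>

text \<open>The term \<open>|z|\<^sup>2/2\<close> raises circle means by \<open>\<rho>\<^sup>2/2\<close>, which makes the sub-mean inequality strict.\<close>
lemma submean_plus_harmonic_no_local_max:
  fixes f h :: "complex \<Rightarrow> real"
  assumes "0 < \<epsilon>" and cont: "continuous_on (ball p \<epsilon>) f"
    and submean: "\<exists>\<delta>>0. \<forall>\<rho>. 0 \<le> \<rho> \<and> \<rho> < \<delta> \<longrightarrow> f p \<le> circle_mean f p \<rho>"
    and mean: "\<And>\<rho>. 0 < \<rho> \<Longrightarrow> \<rho> < \<epsilon> \<Longrightarrow>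
      ((\<lambda>t. h (p + of_real \<rho> * cis t)) has_integral 2*pi * h p) {0..2*pi}"
    and max: "\<And>z. z \<in> ball p \<epsilon> \<Longrightarrow> f z + h z + (cmod z)^2 / 2 \<le> f p + h p + (cmod p)^2 / 2"
  shows False
proof -
  obtain \<delta> where "0 < \<delta>" and sm: "\<And>\<rho>. 0 \<le> \<rho> \<Longrightarrow> \<rho> < \<delta> \<Longrightarrow> f p \<le> circle_mean f p \<rho>"
    using submean by blast
  define \<rho> where "\<rho> = min \<delta> \<epsilon> / 2"
  have \<rho>: "0 < \<rho>" "\<rho> < \<delta>" "\<rho> < \<epsilon>" using \<open>0 < \<delta>\<close> \<open>0 < \<epsilon>\<close> by (auto simp: \<rho>_def)
  define u where "u t = p + of_real \<rho> * cis t" for t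
  have u: "u t \<in> ball p \<epsilon>" for t using \<rho> by (simp add: u_def dist_norm norm_mult)
  define I where "I = integral {0..2*pi} (\<lambda>t. f (u t))"
  have "continuous_on {0..2*pi} (\<lambda>t. f (u t))"
    by (rule continuous_on_compose2[OF cont]) (use u in \<open>auto simp: u_def intro!: continuous_intros\<close>)
  then have int_f: "((\<lambda>t. f (u t)) has_integral I) {0..2*pi}"
    unfolding I_def by (intro integrable_integral integrable_continuous_interval)
  have "f p \<le> I / (2*pi)" using sm[of \<rho>] \<rho> by (simp add: circle_mean_def I_def u_def)
  then have f_le: "2*pi * f p \<le> I" by (simp add: field_simps)
  have "((\<lambda>t. f (u t) + h (u t) + (cmod (u t))^2 / 2) has_integral
      I + 2*pi * h p + 2*pi * ((cmod p)^2 + \<rho>^2) / 2) {0..2*pi}"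
    unfolding u_def using \<rho>
    by (intro has_integral_add has_integral_divide int_f[unfolded u_def] mean norm_sq_circle_mean) auto
  moreover have "((\<lambda>t. f p + h p + (cmod p)^2 / 2) has_integral 2*pi * (f p + h p + (cmod p)^2 / 2)) {0..2*pi}"
    using has_integral_const_real[of "f p + h p + (cmod p)^2 / 2" 0 "2*pi"] by simp
  ultimately have "I + 2*pi * h p + 2*pi * ((cmod p)^2 + \<rho>^2) / 2 \<le> 2*pi * (f p + h p + (cmod p)^2 / 2)"
    by (rule has_integral_le) (use max u in auto)
  moreover have "2*pi * ((cmod p)^2 + \<rho>^2) / 2 = pi * (cmod p)^2 + pi * \<rho>^2"
    and "2*pi * (f p + h p + (cmod p)^2 / 2) = 2*pi * f p + 2*pi * h p + pi * (cmod p)^2"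
    by (simp_all add: algebra_simps)
  moreover have "0 < pi * \<rho>^2" using \<rho> by simp
  ultimately show False using f_le by linarith
qed

lemma perforated_disc_max_on_boundary:
  fixes f :: "complex \<Rightarrow> real" and w :: "'i \<Rightarrow> complex" and \<kappa> :: real
  assumes cont: "continuous_on (ball 0 1) f" and sub: "subharmonic_on f (ball 0 1)"
    and c: "0 < c" "c < 1" and "finite I" and w: "\<And>k. k \<in> I \<Longrightarrow> cmod (w k) < c" and "0 < \<eta>"
  defines "K \<equiv> {z. cmod z \<le> c \<and> (\<forall>k\<in>I. \<eta> \<le> cmod (z - w k))}"
    and "\<Phi> \<equiv> \<lambda>z. f z + \<kappa> * (\<Sum>k\<in>I. disc_green c z (w k)) + (cmod z)^2 / 2"
  assumes "q \<in> K"
  obtains p where "p \<in> K" "\<Phi> q \<le> \<Phi> p" "cmod p = c \<or> (\<exists>k\<in>I. cmod (p - w k) = \<eta>)"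
proof -
  have K_eq: "K = cball 0 c \<inter> (\<Inter>k\<in>I. - ball (w k) \<eta>)"
    by (auto simp: K_def dist_norm norm_minus_commute not_less)
  have "compact K"
    unfolding K_eq by (intro compact_Int_closed compact_cball closed_INT ballI closed_Compl open_ball)
  moreover have "continuous_on K \<Phi>"
    unfolding \<Phi>_def disc_green_def
  proof (intro continuous_intros continuous_on_subset[OF cont])
    show "K \<subseteq> ball 0 1" using c by (auto simp: K_def)
    show "\<forall>z\<in>K. cmod (of_real (c^2) - cnj (w k) * z) \<noteq> 0" if "k \<in> I" for k
      using norm_disc_green_numerator_ge[of c _ "w k"] c w[OF that] by (fastforce simp: K_def)
    show "\<forall>z\<in>K. cmod (z - w k) \<noteq> 0" if "k \<in> I" for k
      using that \<open>0 < \<eta>\<close> by (force simp: K_def)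
  qed auto
  ultimately obtain p where p: "p \<in> K" "\<And>z. z \<in> K \<Longrightarrow> \<Phi> z \<le> \<Phi> p"
    using continuous_attains_sup[of K \<Phi>] \<open>q \<in> K\<close> by blast
  have "cmod p = c \<or> (\<exists>k\<in>I. cmod (p - w k) = \<eta>)"
  proof (rule ccontr)
    assume "\<not> ?thesis"
    then have "p \<in> ball 0 c \<inter> (\<Inter>k\<in>I. - cball (w k) \<eta>)"
      using p(1) by (auto simp: K_def dist_norm norm_minus_commute)
    moreover have "open (ball 0 c \<inter> (\<Inter>k\<in>I. - cball (w k) \<eta>))"
      using \<open>finite I\<close> by (intro open_Int open_ball open_INT ballI open_Compl closed_cball)
    ultimately obtain \<epsilon> where "0 < \<epsilon>" and \<epsilon>: "ball p \<epsilon> \<subseteq> ball 0 c \<inter> (\<Inter>k\<in>I. - cball (w k) \<eta>)"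
      by (meson open_contains_ball)
    have "ball p \<epsilon> \<subseteq> K"
    proof
      fix z assume "z \<in> ball p \<epsilon>"
      from subsetD[OF \<epsilon> this] have "cmod z < c \<and> (\<forall>k\<in>I. \<eta> < cmod (z - w k))"
        by (auto simp: dist_norm norm_minus_commute)
      then show "z \<in> K" by (auto simp: K_def less_imp_le)
    qed
    show False
    proof (rule submean_plus_harmonic_no_local_max[OF \<open>0 < \<epsilon>\<close>])
      show "continuous_on (ball p \<epsilon>) f"
        using \<open>ball p \<epsilon> \<subseteq> K\<close> c by (intro continuous_on_subset[OF cont]) (auto simp: K_def)
      show "\<exists>\<delta>>0. \<forall>\<rho>. 0 \<le> \<rho> \<and> \<rho> < \<delta> \<longrightarrow> f p \<le> circle_mean f p \<rho>"
        using sub p(1) c by (auto simp: subharmonic_on_def K_def)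
      show "((\<lambda>t. \<kappa> * (\<Sum>k\<in>I. disc_green c (p + of_real \<rho> * cis t) (w k))) has_integral
          2*pi * (\<kappa> * (\<Sum>k\<in>I. disc_green c p (w k)))) {0..2*pi}" if "0 < \<rho>" "\<rho> < \<epsilon>" for \<rho>
      proof -
        have "cmod p + \<rho> < c"
          using \<epsilon> ball_subset_ball_iff[of p \<epsilon> 0 c] \<open>0 < \<epsilon>\<close> that by auto
        moreover have "\<rho> < cmod (p - w k)" if "k \<in> I" for k
        proof (rule ccontr)
          assume "\<not> \<rho> < cmod (p - w k)"
          then have "w k \<in> ball p \<epsilon>" using \<open>\<rho> < \<epsilon>\<close> by (simp add: dist_norm)
          from subsetD[OF \<epsilon> this] show False using \<open>0 < \<eta>\<close> \<open>k \<in> I\<close> by auto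
        qed
        ultimately have "((\<lambda>t. \<Sum>k\<in>I. disc_green c (p + of_real \<rho> * cis t) (w k)) has_integral
            (\<Sum>k\<in>I. 2*pi * disc_green c p (w k))) {0..2*pi}"
          using \<open>0 < \<rho>\<close> c w by (intro has_integral_sum \<open>finite I\<close> disc_green_circle_mean) auto
        from has_integral_mult_right[OF this, of \<kappa>] show ?thesis
          by (simp add: sum_distrib_left mult.left_commute)
      qed
      show "f z + \<kappa> * (\<Sum>k\<in>I. disc_green c z (w k)) + (cmod z)^2 / 2
          \<le> f p + \<kappa> * (\<Sum>k\<in>I. disc_green c p (w k)) + (cmod p)^2 / 2" if "z \<in> ball p \<epsilon>" for z
        using p(2)[of z] \<open>ball p \<epsilon> \<subseteq> K\<close> that by (auto simp: \<Phi>_def)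
    qed
  qed
  then show ?thesis using that p \<open>q \<in> K\<close> by blast
qed

section \<open>The barrier argument\<close>

text \<open>With \<open>\<kappa> = 3 / (m N)\<close> the Green potentials contribute at least \<open>3\<close> at \<open>z\<^sub>0\<close>, each being \<open>\<ge> m\<close>
  there, and at most \<open>C\<close> on the boundary of a hole.\<close>
lemma no_deep_discs_on_spaced_circles:
  fixes f :: "complex \<Rightarrow> real" and w :: "nat \<Rightarrow> complex"
  assumes cont: "continuous_on (ball 0 1) f" and sub: "subharmonic_on f (ball 0 1)"
    and nonpos: "\<forall>z\<in>ball 0 1. f z \<le> 0"
    and radii: "0 \<le> r" "r < a" "a < b" "b < c" "c < 1" "b - a \<le> a - r"
    and z0: "cmod z0 < r" "-2 < f z0"
    and "0 < N" and w: "\<And>k. k \<in> {1..N} \<Longrightarrow> cmod (w k) = a + real k * ((b - a) / N)"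
    and deep: "\<And>k z. k \<in> {1..N} \<Longrightarrow> cmod (z - w k) \<le> (b - a) / N / 4 \<Longrightarrow> f z < -C"
  defines "m \<equiv> ln (1 + (c^2 - r^2) * (c^2 - b^2) / 4) / 2"
  assumes C: "C = 3 * (6 - ln (b - a)) / m"
  shows False
proof -
  define \<eta> where "\<eta> = (b - a) / N / 4"
  define \<kappa> where "\<kappa> = 3 / (m * N)"
  define K where "K = {z. cmod z \<le> c \<and> (\<forall>k\<in>{1..N}. \<eta> \<le> cmod (z - w k))}"
  define \<Phi> where "\<Phi> = (\<lambda>z. f z + \<kappa> * (\<Sum>k\<in>{1..N}. disc_green c z (w k)) + (cmod z)^2 / 2)"
  have "r^2 < c^2" "b^2 < c^2" using radii by (auto intro!: power_strict_mono)
  then have "0 < m" unfolding m_def by (intro divide_pos_pos ln_gt_zero) auto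
  have "(b - a) / N \<le> (b - a) / 1" using radii \<open>0 < N\<close> by (intro divide_left_mono) auto
  then have "(b - a) / N / 4 \<le> (b - a) / 1 / 4" by (rule divide_right_mono) simp
  then have \<eta>: "0 < \<eta>" "\<eta> \<le> (b - a) / 4" using radii \<open>0 < N\<close> by (simp_all add: \<eta>_def)
  have w_ab: "a \<le> cmod (w k) \<and> cmod (w k) \<le> b" if "k \<in> {1..N}" for k
  proof -
    have "real k * ((b - a) / N) \<le> real N * ((b - a) / N)"
      using that radii by (intro mult_right_mono) auto
    then show ?thesis using w[OF that] that radii \<open>0 < N\<close> by auto
  qed
  have "z0 \<in> K"
  proof -
    have "\<eta> \<le> cmod (z0 - w k)" if "k \<in> {1..N}" for k
      using w_ab[OF that] norm_triangle_ineq2[of "w k" z0] z0 radii \<eta> by (simp add: norm_minus_commute)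
    then show ?thesis using z0 radii by (auto simp: K_def)
  qed
  have "0 < c" and w_c: "\<And>k. k \<in> {1..N} \<Longrightarrow> cmod (w k) < c" using w_ab radii by force+
  from perforated_disc_max_on_boundary[where I="{1..N}" and \<kappa>=\<kappa>,
      OF cont sub \<open>0 < c\<close> radii(5) finite_atLeastAtMost w_c \<open>0 < \<eta>\<close> \<open>z0 \<in> K\<close>[unfolded K_def]]
  obtain p where p: "p \<in> K" "\<Phi> z0 \<le> \<Phi> p" and "cmod p = c \<or> (\<exists>j\<in>{1..N}. cmod (p - w j) = \<eta>)"
    unfolding K_def \<Phi>_def by blast
  then consider "cmod p = c" | j where "j \<in> {1..N}" "cmod (p - w j) = \<eta>" by blast
  then have "\<Phi> p \<le> 1/2"
  proof cases
    case 1
    have "disc_green c p (w k) = 0" if "k \<in> {1..N}" for k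
    proof -
      have "p \<noteq> w k" using 1 w_ab[OF that] radii by auto
      then show ?thesis using disc_green_eq_0_on_circle[OF _ 1] radii by auto
    qed
    moreover have "f p \<le> 0" "(cmod p)^2 \<le> 1"
      using nonpos 1 radii by (auto simp: abs_square_le_1)
    ultimately show ?thesis by (simp add: \<Phi>_def)
  next
    case 2
    have "(\<Sum>k\<in>{1..N}. disc_green c p (w k)) \<le> real N * (6 - ln (b - a))"
    proof (rule disc_green_sum_near_pole_le[OF \<open>0 < c\<close> _ \<open>0 < N\<close> _ _ _ 2(1)])
      show "cmod (w k) = a + real k * ((b - a) / N) \<and> cmod (w k) < c" if "k \<in> {1..N}" for k
        using w[OF that] w_c[OF that] by simp
      show "cmod p \<le> c" using p(1) by (simp add: K_def)
      show "cmod (p - w j) = (b - a) / N / 4" using 2(2) by (simp add: \<eta>_def)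
    qed (use radii in auto)
    then have "\<kappa> * (\<Sum>k\<in>{1..N}. disc_green c p (w k)) \<le> C"
      using \<open>0 < m\<close> \<open>0 < N\<close> by (auto simp: \<kappa>_def C field_simps)
    moreover have "f p < -C" using deep[OF 2(1)] 2(2) by (simp add: \<eta>_def)
    moreover have "(cmod p)^2 \<le> 1" using p radii by (auto simp: K_def abs_square_le_1)
    ultimately show ?thesis by (simp add: \<Phi>_def)
  qed
  moreover have "1 < \<Phi> z0"
  proof -
    have "m \<le> disc_green c z0 (w k)" if "k \<in> {1..N}" for k
      unfolding m_def using w_ab[OF that] z0 radii \<open>z0 \<in> K\<close> \<eta> that
      by (intro disc_green_ge) (auto simp: K_def)
    then have "real N * m \<le> (\<Sum>k\<in>{1..N}. disc_green c z0 (w k))"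
      using sum_bounded_below[of "{1..N}" m] by simp
    then have "3 \<le> \<kappa> * (\<Sum>k\<in>{1..N}. disc_green c z0 (w k))"
      using \<open>0 < m\<close> \<open>0 < N\<close> by (simp add: \<kappa>_def field_simps)
    moreover have "0 \<le> (cmod z0)^2 / 2" by simp
    ultimately show ?thesis using z0 unfolding \<Phi>_def by linarith
  qed
  ultimately show False using p(2) by linarith
qed

lemma A_fam_circle_bounded_below:
  fixes f :: "complex \<Rightarrow> real"
  assumes r: "0 < r" "r < 1" and fA: "f \<in> A_fam r"
  defines "a \<equiv> (1 + 3*r) / 4" and "b \<equiv> (1 + r) / 2" and "c \<equiv> (3 + r) / 4"
  defines "C \<equiv> 3 * (6 - ln (b - a)) / (ln (1 + (c^2 - r^2) * (c^2 - b^2) / 4) / 2)"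
  shows "\<exists>s\<in>{a..b}. \<forall>z\<in>sphere 0 s. -(C + 1) \<le> f z"
proof (rule ccontr)
  assume "\<not> ?thesis"
  then have deep_points: "\<forall>s\<in>{a..b}. \<exists>z. cmod z = s \<and> f z < -(C + 1)" by (fastforce simp: not_le)
  have radii: "r < a" "a < b" "b < c" "c < 1" "b - a = a - r" "c - b = b - a"
    using r by (auto simp: a_def b_def c_def field_simps)
  have cont: "continuous_on (ball 0 1) f" and sub: "subharmonic_on f (ball 0 1)"
    and nonpos: "\<forall>z\<in>ball 0 1. f z \<le> 0" and "-1 \<le> Sup (f ` ball 0 r)"
    using fA by (auto simp: A_fam_def)
  then obtain z0 where z0: "cmod z0 < r" "-2 < f z0"
    using r cSup_least[of "f ` ball 0 r" "-2"] by (force simp: not_less)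
  have "uniformly_continuous_on (cball 0 c) f"
    using radii by (intro compact_uniformly_continuous continuous_on_subset[OF cont]) auto
  then obtain \<delta> where "0 < \<delta>"
    and uc: "\<And>x y. x \<in> cball 0 c \<Longrightarrow> y \<in> cball 0 c \<Longrightarrow> dist y x < \<delta> \<Longrightarrow> dist (f y) (f x) < 1"
    unfolding uniformly_continuous_on_def by (meson zero_less_one)
  obtain N :: nat where N: "(b - a) / \<delta> < N" using reals_Archimedean2 by blast
  then have "0 < N" using radii \<open>0 < \<delta>\<close> by (metis divide_pos_pos diff_gt_0_iff_gt of_nat_0_less_iff order.strict_trans)
  have "(b - a) / N < \<delta>" using N \<open>0 < \<delta>\<close> \<open>0 < N\<close> by (simp add: field_simps)
  moreover have "(b - a) / N \<le> (b - a) / 1" using radii \<open>0 < N\<close> by (intro divide_left_mono) auto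
  ultimately have spacing: "(b - a) / N < \<delta>" "(b - a) / N \<le> b - a" by simp_all
  have radius_in: "a + real k * ((b - a) / N) \<in> {a..b}" if "k \<in> {1..N}" for k
  proof -
    have "real k * ((b - a) / N) \<le> real N * ((b - a) / N)"
      using that radii by (intro mult_right_mono) auto
    then show ?thesis using that radii \<open>0 < N\<close> by auto
  qed
  then have "\<forall>k\<in>{1..N}. \<exists>z. cmod z = a + real k * ((b - a) / N) \<and> f z < -(C + 1)"
    using deep_points by blast
  then obtain w where w: "\<And>k. k \<in> {1..N} \<Longrightarrow> cmod (w k) = a + real k * ((b - a) / N) \<and> f (w k) < -(C + 1)"
    by metis
  show False
  proof (rule no_deep_discs_on_spaced_circles[OF cont sub nonpos _ radii(1-4) _ z0 \<open>0 < N\<close>])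
    fix k z assume k: "k \<in> {1..N}" and z: "cmod (z - w k) \<le> (b - a) / N / 4"
    have "cmod (w k) \<le> b" using w[OF k] radius_in[OF k] by simp
    have "0 \<le> (b - a) / N" using radii by simp
    have "cmod (z - w k) \<le> (b - a) / N" using z \<open>0 \<le> (b - a) / N\<close> by simp
    then have "dist z (w k) < \<delta>" using spacing(1) by (simp add: dist_norm)
    moreover have "cmod z \<le> c"
      using norm_triangle_ineq2[of z "w k"] \<open>cmod (z - w k) \<le> (b - a) / N\<close> spacing(2) radii \<open>cmod (w k) \<le> b\<close>
      by linarith
    ultimately have "dist (f z) (f (w k)) < 1" using uc[of "w k" z] radii \<open>cmod (w k) \<le> b\<close> by auto
    then show "f z < -C" using w[OF k] by (simp add: dist_real_def abs_less_iff)
  qed (use r radii w in \<open>auto simp: C_def\<close>)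
qed

lemma t_val_ge_of_circle_bound:
  fixes f :: "complex \<Rightarrow> real"
  assumes cont: "continuous_on (ball 0 1) f" and nonpos: "\<forall>z\<in>ball 0 1. f z \<le> 0"
    and r: "0 < r" "r < 1" and s: "s \<in> {(1 + 3*r) / 4..(1 + r) / 2}"
    and bound: "\<forall>z\<in>sphere 0 s. B \<le> f z"
  shows "B \<le> t_val r f"
proof -
  have on_circle: "complex_of_real s' \<in> sphere 0 s'" "sphere 0 s' \<subseteq> ball 0 1"
    if "s' \<in> {(1 + 3*r) / 4..(1 + r) / 2}" for s'
    using that r by auto
  have bdd: "bdd_below (f ` sphere 0 s')" if "s' \<in> {(1 + 3*r) / 4..(1 + r) / 2}" for s'
    using on_circle(2)[OF that]
    by (intro bounded_imp_bdd_below compact_imp_bounded compact_continuous_image continuous_on_subset[OF cont]) auto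
  have "(INF z\<in>sphere 0 s'. f z) \<le> 0" if "s' \<in> {(1 + 3*r) / 4..(1 + r) / 2}" for s'
  proof -
    have "f (complex_of_real s') \<le> 0" using nonpos on_circle[OF that] by blast
    with cINF_lower[OF bdd[OF that] on_circle(1)[OF that]] show ?thesis by linarith
  qed
  then have "bdd_above ((\<lambda>s'. INF z\<in>sphere 0 s'. f z) ` {(1 + 3*r) / 4..(1 + r) / 2})"
    by (intro bdd_aboveI2) auto
  moreover have "B \<le> (INF z\<in>sphere 0 s. f z)"
    using bound on_circle(1)[OF s] by (intro cINF_greatest) auto
  ultimately show ?thesis unfolding t_val_def by (rule cSUP_upper2[OF _ s])
qed

theorem lemma2p3:
  fixes r :: real
  assumes "0 < r" "r < 1"
  shows "\<exists>C::real. \<forall>f\<in>A_fam r. C \<le> t_val r f"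
proof -
  define a where "a = (1 + 3*r) / 4"
  define b where "b = (1 + r) / 2"
  define c where "c = (3 + r) / 4"
  define C where "C = 3 * (6 - ln (b - a)) / (ln (1 + (c^2 - r^2) * (c^2 - b^2) / 4) / 2)"
  have "-(C + 1) \<le> t_val r f" if f: "f \<in> A_fam r" for f
  proof -
    obtain s where "s \<in> {a..b}" "\<forall>z\<in>sphere 0 s. -(C + 1) \<le> f z"
      using A_fam_circle_bounded_below[OF assms f] unfolding a_def b_def c_def C_def by blast
    then show ?thesis
      using t_val_ge_of_circle_bound[OF _ _ assms] f by (auto simp: A_fam_def a_def b_def)
  qed
  then show ?thesis by blast
qed

end
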